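(* Fix $t\in[H]$ and $u>0$. Let $\mathcal D_2$ consist of $l$ i.i.d. episodes from behavior policy $\mu$, and let $V_{t+1},V^{\rm in}_{t+1}:\mathcal S\to\mathbb R$ be fixed (not depending on $\mathcal D_2$) with $\|V_{t+1}-V^{\rm in}_{t+1}\|_\infty\le2u$. Let $f(s,a)=4u\sqrt{\log(2HSA/\delta)/(l\,d^\mu_t(s,a))}$, let $n'_{t,s,a}$ be the number of episodes in $\mathcal D_2$ with $(s_t,a_t)=(s,a)$, and define \[ g_t(s,a)=\begin{cases}P_t(\cdot|s,a)^\top[V_{t+1}-V^{\rm in}_{t+1}]-f(s,a),& n'_{t,s,a}<\frac12l\,d^\mu_t(s,a),\\ \frac1{n'_{t,s,a}}\sum_{j=1}^l[V_{t+1}(s'^{(j)}_{t+1})-V^{\rm in}_{t+1}(s'^{(j)}_{t+1})]\mathbf 1[s'^{(j)}_t=s,a'^{(j)}_t=a]-f(s,a),&\text{otherwise.}\end{cases} \] Then with probability at least $1-\delta/H$, for all $(s,a)$ with $d^\mu_t(s,a)>0$, \[ 0\le P_t(\cdot|s,a)^\top[V_{t+1}-V^{\rm in}_{t+1}]-g_t(s,a)\le8u\sqrt{\frac{\log(2HSA/\delta)}{l\,d^\mu_t(s,a)}}. \]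
   Context: Finite-horizon tabular MDP with $S$ states, $A$ actions, horizon $H$, transitions $P_t$; episodes generated as $s_1\sim d_1$, $a_t\sim\mu_t(\cdot|s_t)$, $s_{t+1}\sim P_t(\cdot|s_t,a_t)$; $(s'^{(j)}_t,a'^{(j)}_t)$ denote the data of the $j$-th episode of $\mathcal D_2$. $d^\mu_t(s,a)=\mathbb P^\mu(s_t=s,a_t=a)$. $\delta\in(0,1)$. *)

theory Defs
  imports "HOL-Probability.Probability"
begin

text \<open>Time steps are 1-based. Episode list index i holds (s_(i+1), a_(i+1)).
  rollout mu P t k s: starting at time t in state s, generate k (state,action) pairs.\<close>

fun rollout :: "(nat \<Rightarrow> 's \<Rightarrow> 'a pmf) \<Rightarrow> (nat \<Rightarrow> 's \<Rightarrow> 'a \<Rightarrow> 's pmf)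
    \<Rightarrow> nat \<Rightarrow> nat \<Rightarrow> 's \<Rightarrow> ('s \<times> 'a) list pmf" where
  "rollout mu P t 0 s = return_pmf []"
| "rollout mu P t (Suc k) s =
     do { a \<leftarrow> mu t s; s' \<leftarrow> P t s a; rest \<leftarrow> rollout mu P (Suc t) k s';
          return_pmf ((s, a) # rest) }"

text \<open>One episode of horizon H under behaviour policy mu; we record (s_t,a_t) for t=1..H+1
  (so that s_(H+1) is available; the extra action a_(H+1) is irrelevant).\<close>
definition episode :: "'s pmf \<Rightarrow> (nat \<Rightarrow> 's \<Rightarrow> 'a pmf) \<Rightarrow> (nat \<Rightarrow> 's \<Rightarrow> 'a \<Rightarrow> 's pmf)
    \<Rightarrow> nat \<Rightarrow> ('s \<times> 'a) list pmf" where
  "episode d1 mu P H = do { s \<leftarrow> d1; rollout mu P 1 (Suc H) s }"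

definition state_at :: "('s \<times> 'a) list \<Rightarrow> nat \<Rightarrow> 's" where
  "state_at ep t = fst (ep ! (t - 1))"

definition action_at :: "('s \<times> 'a) list \<Rightarrow> nat \<Rightarrow> 'a" where
  "action_at ep t = snd (ep ! (t - 1))"

definition occ :: "'s pmf \<Rightarrow> (nat \<Rightarrow> 's \<Rightarrow> 'a pmf) \<Rightarrow> (nat \<Rightarrow> 's \<Rightarrow> 'a \<Rightarrow> 's pmf)
    \<Rightarrow> nat \<Rightarrow> nat \<Rightarrow> 's \<Rightarrow> 'a \<Rightarrow> real" where
  "occ d1 mu P H t s a =
     measure_pmf.prob (episode d1 mu P H) {ep. state_at ep t = s \<and> action_at ep t = a}"

definition Pexp :: "(nat \<Rightarrow> 's \<Rightarrow> 'a \<Rightarrow> 's pmf) \<Rightarrow> nat \<Rightarrow> 's \<Rightarrow> 'a \<Rightarrow> ('s::finite \<Rightarrow> real) \<Rightarrow> real" where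
  "Pexp P t s a W = (\<Sum>s'\<in>UNIV. pmf (P t s a) s' * W s')"

definition visit_count :: "('s \<times> 'a) list list \<Rightarrow> nat \<Rightarrow> 's \<Rightarrow> 'a \<Rightarrow> nat" where
  "visit_count D t s a = length (filter (\<lambda>ep. state_at ep t = s \<and> action_at ep t = a) D)"

end

theory Submission
  imports Defs
begin

(* Fix (s, a) and reduce every episode to None if it does not visit (s, a) at step t, and to
   Some s_(t+1) otherwise. By the Markov property, conditionally on the sequence of pairs
   (s_t, a_t) of all episodes, these records are independent, and the visiting ones are i.i.d.
   draws from P_t(.|s,a). Hoeffding's inequality for the visiting episodes shows that, once at
   least l d(s,a)/2 of them visit, their empirical mean of V - Vin is within
   4u sqrt(L / (l d(s,a))) of the true mean except with probability 2 exp(-L) = delta/(HSA);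
   with fewer visits g falls back on the true mean. A union bound over the S A pairs concludes. *)

lemma replicate_pmf_eq_map_Pi_pmf:
  "replicate_pmf l p = map_pmf (\<lambda>f. map f [0..<l]) (Pi_pmf {..<l} dflt (\<lambda>_. p))"
proof (induction l)
  case 0
  then show ?case by simp
next
  case (Suc l)
  have "replicate_pmf (Suc l) p = do {xs \<leftarrow> replicate_pmf l p; y \<leftarrow> p; return_pmf (xs @ [y])}"
    using replicate_pmf_distrib[of l 1 p] by (simp add: bind_assoc_pmf bind_return_pmf)
  also have "\<dots> = do {y \<leftarrow> p; f \<leftarrow> Pi_pmf {..<l} dflt (\<lambda>_. p); return_pmf (map f [0..<l] @ [y])}"
    by (subst bind_commute_pmf) (simp add: Suc bind_map_pmf)
  also have "\<dots> = map_pmf (\<lambda>f. map f [0..<Suc l]) (Pi_pmf (insert l {..<l}) dflt (\<lambda>_. p))"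
    by (subst Pi_pmf_insert') (auto simp: map_bind_pmf intro!: bind_pmf_cong)
  also have "insert l {..<l} = {..<Suc l}" by auto
  finally show ?case .
qed

lemma measure_pmf_prob_bind_le:
  assumes "\<And>x. x \<in> set_pmf p \<Longrightarrow> measure_pmf.prob (f x) A \<le> b"
  shows "measure_pmf.prob (bind_pmf p f) A \<le> b"
proof -
  obtain x where "x \<in> set_pmf p" using set_pmf_not_empty by fast
  then have "0 \<le> b" using assms[of x] measure_nonneg order_trans by blast
  have "emeasure (bind_pmf p f) A = (\<integral>\<^sup>+x. emeasure (f x) A \<partial>p)" by simp
  also have "\<dots> \<le> (\<integral>\<^sup>+x. ennreal b \<partial>p)"
    by (intro nn_integral_mono_AE AE_pmfI) (simp add: measure_pmf.emeasure_eq_measure ennreal_leI assms)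
  also have "\<dots> = ennreal b" by (simp add: measure_pmf.emeasure_space_1)
  finally show ?thesis using \<open>0 \<le> b\<close> by (simp add: measure_pmf.emeasure_eq_measure)
qed

lemma measure_pmf_prob_ge_union_bound:
  assumes "finite K" and "\<And>i. i \<in> K \<Longrightarrow> measure_pmf.prob M (B i) \<le> e"
    and "- (\<Union>i\<in>K. B i) \<subseteq> G"
  shows "1 - real (card K) * e \<le> measure_pmf.prob M G"
proof -
  have "measure_pmf.prob M (\<Union>i\<in>K. B i) \<le> (\<Sum>i\<in>K. measure_pmf.prob M (B i))"
    by (rule measure_pmf.finite_measure_subadditive_finite) (simp_all add: assms)
  also have "\<dots> \<le> real (card K) * e"
    using sum_mono[of K _ "\<lambda>_. e"] assms(2) by simp
  finally have "1 - real (card K) * e \<le> measure_pmf.prob M (- (\<Union>i\<in>K. B i))"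
    using measure_pmf.prob_compl[of "\<Union>i\<in>K. B i" M] by (simp add: Compl_eq_Diff_UNIV)
  also have "\<dots> \<le> measure_pmf.prob M G"
    by (rule measure_pmf.finite_measure_mono[OF assms(3)]) simp
  finally show ?thesis .
qed

lemma Pi_pmf_Hoeffding_mean:
  fixes Y :: "'b \<Rightarrow> real"
  assumes "finite J" and "I \<subseteq> J" and "\<And>j. j \<in> I \<Longrightarrow> q j = p"
    and "\<And>x. \<bar>Y x\<bar> \<le> B" and "B > 0" and "\<epsilon> \<ge> 0"
  shows "measure_pmf.prob (Pi_pmf J z q)
           {Z. \<epsilon> \<le> \<bar>(\<Sum>j\<in>I. Y (Z j)) / real (card I) - measure_pmf.expectation p Y\<bar>}
         \<le> 2 * exp (- (real (card I) * \<epsilon>\<^sup>2) / (2 * B\<^sup>2))"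
proof (cases "I = {}")
  case False
  define Q where "Q = Pi_pmf J z q"
  obtain j0 where "j0 \<in> I" using False by blast
  have component: "map_pmf (\<lambda>Z. Z j) Q = p" if "j \<in> I" for j
    using that assms(1-3) by (auto simp: Q_def Pi_pmf_component)
  have law: "distr Q borel (\<lambda>Z. Y (Z j)) = distr p borel Y" if "j \<in> I" for j
  proof -
    have "distr Q borel (\<lambda>Z. Y (Z j)) = distr (map_pmf (\<lambda>Z. Z j) Q) borel Y"
      unfolding map_pmf_rep_eq by (subst distr_distr) (auto simp: o_def)
    then show ?thesis using component[OF that] by simp
  qed
  have mean: "measure_pmf.expectation Q (\<lambda>Z. Y (Z j0)) = measure_pmf.expectation p Y"
    using integral_map_pmf[of "\<lambda>Z. Z j0" Q Y] component[OF \<open>j0 \<in> I\<close>] by simp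
  \<comment> \<open>the i.i.d. locale needs one reference variable; any coordinate in I will do\<close>
  interpret Hoeffding_ineq_iid Q I "\<lambda>j Z. Y (Z j)" "\<lambda>Z. Y (Z j0)" "-B" B "measure_pmf.expectation p Y"
  proof unfold_locales
    have "prob_space.indep_vars Q (\<lambda>_. count_space UNIV) (\<lambda>j Z. Z j) I"
      using prob_space.indep_vars_subset[OF measure_pmf.prob_space_axioms
          indep_vars_Pi_pmf[OF \<open>finite J\<close>] \<open>I \<subseteq> J\<close>]
      by (simp add: Q_def)
    then show "prob_space.indep_vars Q (\<lambda>_. borel) (\<lambda>j Z. Y (Z j)) I"
      by (rule prob_space.indep_vars_compose2[OF measure_pmf.prob_space_axioms]) simp
    show "distr Q borel (\<lambda>Z. Y (Z j)) = distr Q borel (\<lambda>Z. Y (Z j0))" if "j \<in> I" for j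
      using law[OF that] law[OF \<open>j0 \<in> I\<close>] by simp
    show "AE Z in Q. Y (Z j0) \<in> {- B..B}"
      using assms(4) by (intro AE_I2) (auto simp: abs_le_iff minus_le_iff)
  qed (use assms(1,2) finite_subset mean in simp_all)
  show ?thesis
    using Hoeffding_ineq_abs_ge'[OF \<open>\<epsilon> \<ge> 0\<close> _ False] \<open>B > 0\<close>
    by (simp add: Q_def \<mu>_def power2_eq_square field_simps)
qed simp

lemma Pi_pmf_option_mean_deviation:
  fixes p :: "'b pmf" and W :: "'b \<Rightarrow> real"
  assumes J: "finite J" "I \<subseteq> J" and W: "\<And>x. \<bar>W x\<bar> \<le> B" and "B > 0" and "\<epsilon> \<ge> 0"
  defines "visits \<equiv> \<lambda>Z. real (card {j\<in>J. Z j \<noteq> None})"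
    and "visit_sum \<equiv> \<lambda>Z. \<Sum>j\<in>J. case Z j of None \<Rightarrow> 0 | Some x \<Rightarrow> W x"
  shows "measure_pmf.prob (Pi_pmf J z (\<lambda>j. if j \<in> I then map_pmf Some p else return_pmf None))
           {Z. T \<le> visits Z \<and> \<epsilon> \<le> \<bar>visit_sum Z / visits Z - measure_pmf.expectation p W\<bar>}
         \<le> 2 * exp (- (T * \<epsilon>\<^sup>2) / (2 * B\<^sup>2))"
proof -
  define q where "q = (\<lambda>j. if j \<in> I then map_pmf Some p else return_pmf None)"
  define Y where "Y = (\<lambda>z :: 'b option. case z of None \<Rightarrow> 0 | Some x \<Rightarrow> W x)"
  define n where "n = real (card I)"
  have support: "visits Z = n \<and> visit_sum Z = (\<Sum>j\<in>I. Y (Z j))" if "Z \<in> set_pmf (Pi_pmf J z q)" for Z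
  proof -
    have visited: "Z j \<noteq> None \<longleftrightarrow> j \<in> I" if "j \<in> J" for j
    proof -
      have "Z j \<in> set_pmf (map_pmf (\<lambda>Z. Z j) (Pi_pmf J z q))"
        using \<open>Z \<in> set_pmf (Pi_pmf J z q)\<close> by simp
      then show ?thesis using that J by (cases "j \<in> I") (auto simp: Pi_pmf_component q_def)
    qed
    then have "{j\<in>J. Z j \<noteq> None} = I" using J by blast
    moreover have "visit_sum Z = (\<Sum>j\<in>I. Y (Z j))"
      unfolding visit_sum_def Y_def using J visited
      by (intro sum.mono_neutral_right) (auto split: option.splits)
    ultimately show ?thesis by (simp add: visits_def n_def)
  qed
  let ?Dev = "{Z. \<epsilon> \<le> \<bar>(\<Sum>j\<in>I. Y (Z j)) / n - measure_pmf.expectation p W\<bar>}"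
  have "measure_pmf.prob (Pi_pmf J z q)
          {Z. T \<le> visits Z \<and> \<epsilon> \<le> \<bar>visit_sum Z / visits Z - measure_pmf.expectation p W\<bar>}
      \<le> measure_pmf.prob (Pi_pmf J z q) (if T \<le> n then ?Dev else {})"
    by (rule measure_pmf.finite_measure_mono_AE) (auto simp: AE_measure_pmf_iff support)
  also have "\<dots> \<le> 2 * exp (- (T * \<epsilon>\<^sup>2) / (2 * B\<^sup>2))"
  proof (cases "T \<le> n")
    case True
    have "\<bar>Y x\<bar> \<le> B" for x
      using W \<open>B > 0\<close> by (cases x) (simp_all add: Y_def)
    then have "measure_pmf.prob (Pi_pmf J z q) ?Dev \<le> 2 * exp (- (n * \<epsilon>\<^sup>2) / (2 * B\<^sup>2))"
      using Pi_pmf_Hoeffding_mean[of J I q "map_pmf Some p" Y B \<epsilon> z] J \<open>B > 0\<close> \<open>\<epsilon> \<ge> 0\<close>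
      by (simp add: q_def Y_def n_def)
    also have "\<dots> \<le> 2 * exp (- (T * \<epsilon>\<^sup>2) / (2 * B\<^sup>2))"
      using True by (simp add: divide_right_mono mult_right_mono)
    finally show ?thesis using True by simp
  qed simp
  finally show ?thesis by (simp add: q_def)
qed

lemma rollout_transition:
  assumes "Suc i < k"
  shows "map_pmf (\<lambda>ep. (ep ! i, fst (ep ! Suc i))) (rollout mu P t k s) =
    do {x \<leftarrow> map_pmf (\<lambda>ep. ep ! i) (rollout mu P t k s); map_pmf (Pair x) (P (t + i) (fst x) (snd x))}"
  using assms
proof (induction i arbitrary: t k s)
  case 0
  then obtain k' where k: "k = Suc (Suc k')" by (cases k; cases "k - 1") auto
  have next_state: "map_pmf (\<lambda>rest. (x, fst (rest ! 0))) (rollout mu P (Suc t) (Suc k') s')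
      = return_pmf (x, s')" for x s'
  proof -
    have "map_pmf (\<lambda>rest. (x, fst (rest ! 0))) (rollout mu P (Suc t) (Suc k') s')
        = map_pmf (\<lambda>_. (x, s')) (rollout mu P (Suc t) (Suc k') s')"
      by (rule map_pmf_cong) auto
    then show ?thesis by simp
  qed
  show ?case unfolding k
    apply (simp add: map_bind_pmf bind_map_pmf bind_assoc_pmf bind_return_pmf del: rollout.simps(2))
    apply (simp add: map_bind_pmf bind_return_pmf bind_assoc_pmf)
    apply (simp add: map_pmf_def[symmetric] next_state)
    done
next
  case (Suc i)
  then obtain k' where k: "k = Suc k'" and "Suc i < k'" by (cases k) auto
  show ?case unfolding k
    apply (simp add: map_bind_pmf bind_assoc_pmf bind_return_pmf)
    apply (simp add: map_pmf_def[symmetric] Suc.IH[OF \<open>Suc i < k'\<close>] bind_map_pmf)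
    done
qed

lemma state_action_at_eq_iff: "state_at ep t = s \<and> action_at ep t = a \<longleftrightarrow> ep ! (t - 1) = (s, a)"
  by (auto simp: state_at_def action_at_def prod_eq_iff)

lemma episode_transition:
  assumes "1 \<le> t" and "t \<le> H"
  shows "map_pmf (\<lambda>ep. (ep ! (t - 1), state_at ep (t + 1))) (episode d1 mu P H) =
    do {x \<leftarrow> map_pmf (\<lambda>ep. ep ! (t - 1)) (episode d1 mu P H); map_pmf (Pair x) (P t (fst x) (snd x))}"
proof -
  have "map_pmf (\<lambda>ep. (ep ! (t - 1), state_at ep (t + 1))) (rollout mu P 1 (Suc H) s) =
      do {x \<leftarrow> map_pmf (\<lambda>ep. ep ! (t - 1)) (rollout mu P 1 (Suc H) s);
          map_pmf (Pair x) (P t (fst x) (snd x))}" for s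
    using rollout_transition[of "t - 1" "Suc H" mu P 1 s] assms
    by (simp add: state_at_def del: rollout.simps)
  then show ?thesis
    by (simp add: episode_def map_bind_pmf bind_assoc_pmf del: rollout.simps)
qed

lemma Pexp_eq_expectation: "Pexp P t s a W = measure_pmf.expectation (P t s a) W"
  unfolding Pexp_def by (subst integral_measure_pmf_real[where A = UNIV]) (auto simp: mult.commute)

definition visit_record :: "('s \<times> 'a) list \<Rightarrow> nat \<Rightarrow> 's \<Rightarrow> 'a \<Rightarrow> 's option" where
  "visit_record ep t s a = (if ep ! (t - 1) = (s, a) then Some (state_at ep (t + 1)) else None)"

lemma map_pmf_visit_record_episode:
  fixes s :: 's and a :: 'a
  assumes "1 \<le> t" and "t \<le> H"
  shows "map_pmf (\<lambda>ep. visit_record ep t s a) (episode d1 mu P H) =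
    do {x \<leftarrow> map_pmf (\<lambda>ep. ep ! (t - 1)) (episode d1 mu P H);
        if x = (s, a) then map_pmf Some (P t s a) else return_pmf None}"
proof -
  define h :: "('s \<times> 'a) \<times> 's \<Rightarrow> 's option"
    where "h = (\<lambda>(x, s'). if x = (s, a) then Some s' else None)"
  have "(\<lambda>ep. visit_record ep t s a) = h \<circ> (\<lambda>ep. (ep ! (t - 1), state_at ep (t + 1)))"
    by (auto simp: visit_record_def h_def)
  then have "map_pmf (\<lambda>ep. visit_record ep t s a) (episode d1 mu P H) =
      map_pmf h (map_pmf (\<lambda>ep. (ep ! (t - 1), state_at ep (t + 1))) (episode d1 mu P H))"
    by (simp only: pmf.map_comp)
  also have "\<dots> = map_pmf h (do {x \<leftarrow> map_pmf (\<lambda>ep. ep ! (t - 1)) (episode d1 mu P H);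
                                  map_pmf (Pair x) (P t (fst x) (snd x))})"
    by (simp only: episode_transition[OF assms])
  also have "\<dots> = do {x \<leftarrow> map_pmf (\<lambda>ep. ep ! (t - 1)) (episode d1 mu P H);
                      if x = (s, a) then map_pmf Some (P t s a) else return_pmf None}"
    by (auto simp: h_def map_bind_pmf pmf.map_comp o_def intro!: bind_pmf_cong)
  finally show ?thesis .
qed

definition visit_mean ::
    "nat \<Rightarrow> ('s \<times> 'a) list list \<Rightarrow> nat \<Rightarrow> 's \<Rightarrow> 'a \<Rightarrow> ('s \<Rightarrow> real) \<Rightarrow> real" where
  "visit_mean l D t s a W =
     (\<Sum>j<l. W (state_at (D ! j) (t + 1)) *
        (if state_at (D ! j) t = s \<and> action_at (D ! j) t = a then 1 else 0))
     / real (visit_count D t s a)"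

lemma visit_count_map_eq_card_visit_record:
  "visit_count (map F [0..<l]) t s a = card {j\<in>{..<l}. visit_record (F j) t s a \<noteq> None}"
  unfolding visit_count_def length_filter_conv_card
  by (auto simp: visit_record_def state_action_at_eq_iff intro!: arg_cong[where f = card])

lemma visit_mean_map_eq_visit_record:
  "visit_mean l (map F [0..<l]) t s a W =
    (\<Sum>j<l. case visit_record (F j) t s a of None \<Rightarrow> 0 | Some x \<Rightarrow> W x)
    / real (card {j\<in>{..<l}. visit_record (F j) t s a \<noteq> None})"
  unfolding visit_mean_def visit_count_map_eq_card_visit_record
  by (intro arg_cong2[where f = "(/)"] sum.cong) (auto simp: visit_record_def state_action_at_eq_iff)

lemma prob_visit_mean_deviation:
  fixes W :: "'s::finite \<Rightarrow> real"
  assumes "1 \<le> t" and "t \<le> H" and "\<And>x. \<bar>W x\<bar> \<le> B" and "B > 0" and "\<epsilon> \<ge> 0"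
  shows "measure_pmf.prob (replicate_pmf l (episode d1 mu P H))
           {D. T \<le> real (visit_count D t s a) \<and> \<epsilon> \<le> \<bar>visit_mean l D t s a W - Pexp P t s a W\<bar>}
         \<le> 2 * exp (- (T * \<epsilon>\<^sup>2) / (2 * B\<^sup>2))" (is "measure_pmf.prob _ ?Bad \<le> _")
proof -
  define E where "E = episode d1 mu P H"
  define R where "R = map_pmf (\<lambda>ep. ep ! (t - 1)) E"
  define \<phi> where "\<phi> = (\<lambda>ep. visit_record ep t s a)"
  define q where "q = (\<lambda>x. if x = (s, a) then map_pmf Some (P t s a) else return_pmf None)"
  define visits where "visits Z = real (card {j\<in>{..<l}. Z j \<noteq> None})" for Z :: "nat \<Rightarrow> 's option"
  define Dev where "Dev = {Z. T \<le> visits Z \<and>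
    \<epsilon> \<le> \<bar>(\<Sum>j<l. case Z j of None \<Rightarrow> 0 | Some x \<Rightarrow> W x) / visits Z - measure_pmf.expectation (P t s a) W\<bar>}"
  have preimage: "(\<lambda>F. map F [0..<l]) -` ?Bad = (\<lambda>F. \<phi> \<circ> F) -` Dev"
    by (auto simp: Dev_def visits_def \<phi>_def Pexp_eq_expectation visit_mean_map_eq_visit_record
        visit_count_map_eq_card_visit_record)
  have "measure_pmf.prob (replicate_pmf l E) ?Bad
      = measure_pmf.prob (Pi_pmf {..<l} [] (\<lambda>_. E)) ((\<lambda>F. \<phi> \<circ> F) -` Dev)"
    by (simp only: replicate_pmf_eq_map_Pi_pmf[where dflt = "[]"] measure_map_pmf preimage)
  also have "\<dots> = measure_pmf.prob (Pi_pmf {..<l} (\<phi> []) (\<lambda>_. map_pmf \<phi> E)) Dev"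
    by (subst Pi_pmf_map[of "{..<l}" \<phi> "[]"]) auto
  also have "map_pmf \<phi> E = bind_pmf R q"
    using map_pmf_visit_record_episode[OF assms(1,2)] by (simp add: E_def R_def \<phi>_def q_def)
  also have "Pi_pmf {..<l} (\<phi> []) (\<lambda>_. bind_pmf R q) =
      bind_pmf (Pi_pmf {..<l} (s, a) (\<lambda>_. R)) (\<lambda>\<rho>. Pi_pmf {..<l} (\<phi> []) (\<lambda>j. q (\<rho> j)))"
    by (rule Pi_pmf_bind) simp
  also have "measure_pmf.prob \<dots> Dev \<le> 2 * exp (- (T * \<epsilon>\<^sup>2) / (2 * B\<^sup>2))"
  proof (rule measure_pmf_prob_bind_le)
    fix \<rho> :: "nat \<Rightarrow> 's \<times> 'a"
    have "Pi_pmf {..<l} (\<phi> []) (\<lambda>j. q (\<rho> j)) = Pi_pmf {..<l} (\<phi> [])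
        (\<lambda>j. if j \<in> {j\<in>{..<l}. \<rho> j = (s, a)} then map_pmf Some (P t s a) else return_pmf None)"
      by (rule Pi_pmf_cong) (auto simp: q_def)
    then show "measure_pmf.prob (Pi_pmf {..<l} (\<phi> []) (\<lambda>j. q (\<rho> j))) Dev
        \<le> 2 * exp (- (T * \<epsilon>\<^sup>2) / (2 * B\<^sup>2))"
      using Pi_pmf_option_mean_deviation[of "{..<l}" "{j\<in>{..<l}. \<rho> j = (s, a)}" W B \<epsilon>] assms
      by (simp add: Dev_def visits_def subset_iff)
  qed
  finally show ?thesis by (simp add: E_def)
qed

corollary prob_visit_mean_deviation_sqrt:
  fixes W :: "'s::finite \<Rightarrow> real"
  assumes "1 \<le> t" and "t \<le> H" and "\<And>x. \<bar>W x\<bar> \<le> 2 * u" and "u > 0" and "n > 0" and "L \<ge> 0"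
  shows "measure_pmf.prob (replicate_pmf l (episode d1 mu P H))
           {D. n / 2 \<le> real (visit_count D t s a) \<and>
               4 * u * sqrt (L / n) \<le> \<bar>visit_mean l D t s a W - Pexp P t s a W\<bar>}
         \<le> 2 * exp (- L)"
proof -
  have "n / 2 * (4 * u * sqrt (L / n))\<^sup>2 / (2 * (2 * u)\<^sup>2) = L"
    using assms(4-6) by (simp add: power_mult_distrib power2_eq_square field_simps)
  then show ?thesis
    using prob_visit_mean_deviation[of t H W "2 * u" "4 * u * sqrt (L / n)" l d1 mu P "n / 2" s a] assms
    by simp
qed

theorem lemmaB4:
  fixes d1 :: "'s::finite pmf"
    and mu :: "nat \<Rightarrow> 's \<Rightarrow> 'a::finite pmf"
    and P :: "nat \<Rightarrow> 's \<Rightarrow> 'a \<Rightarrow> 's pmf"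
    and H t l :: nat and u \<delta> :: real
    and V Vin :: "'s \<Rightarrow> real"
  assumes "t \<in> {1..H}" and "u > 0" and "0 < \<delta>" and "\<delta> < 1" and "l > 0"
    and "\<forall>s. \<bar>V s - Vin s\<bar> \<le> 2 * u"
  defines "d \<equiv> occ d1 mu P H t"
    and "L \<equiv> ln (2 * real H * real CARD('s) * real CARD('a) / \<delta>)"
  defines "f \<equiv> (\<lambda>s a. 4 * u * sqrt (L / (real l * d s a)))"
  defines "g \<equiv> (\<lambda>D s a.
           if real (visit_count D t s a) < 1/2 * real l * d s a
           then Pexp P t s a (\<lambda>x. V x - Vin x) - f s a
           else 1 / real (visit_count D t s a) *
                  (\<Sum>j<l. (V (state_at (D ! j) (t + 1)) - Vin (state_at (D ! j) (t + 1))) *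
                     (if state_at (D ! j) t = s \<and> action_at (D ! j) t = a then 1 else 0))
                - f s a)"
  shows "measure_pmf.prob (replicate_pmf l (episode d1 mu P H))
           {D. \<forall>s a. d s a > 0 \<longrightarrow>
                 0 \<le> Pexp P t s a (\<lambda>x. V x - Vin x) - g D s a \<and>
                 Pexp P t s a (\<lambda>x. V x - Vin x) - g D s a \<le> 8 * u * sqrt (L / (real l * d s a))}
         \<ge> 1 - \<delta> / real H"
proof -
  let ?W = "\<lambda>x. V x - Vin x"
  let ?M = "replicate_pmf l (episode d1 mu P H)"
  let ?Good = "{D. \<forall>s a. d s a > 0 \<longrightarrow> 0 \<le> Pexp P t s a ?W - g D s a \<and>
                      Pexp P t s a ?W - g D s a \<le> 8 * u * sqrt (L / (real l * d s a))}"
  define Bad where "Bad = (\<lambda>(s, a). {D. d s a > 0 \<and> real l * d s a / 2 \<le> real (visit_count D t s a) \<and>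
                             f s a \<le> \<bar>visit_mean l D t s a ?W - Pexp P t s a ?W\<bar>})"
  have "1 \<le> real H * CARD('s \<times> 'a)"
    using assms(1) by (simp add: Suc_le_eq flip: of_nat_mult)
  then have "0 \<le> L" and exp_L: "2 * exp (- L) = \<delta> / (real H * CARD('s \<times> 'a))"
    using assms(3,4) by (auto simp: L_def exp_minus field_simps)
  have "measure_pmf.prob ?M (Bad (s, a)) \<le> \<delta> / (real H * CARD('s \<times> 'a))" for s a
  proof (cases "d s a > 0")
    case True
    then show ?thesis
      using prob_visit_mean_deviation_sqrt[of t H ?W u "real l * d s a" L l d1 mu P s a]
        assms \<open>0 \<le> L\<close> exp_L by (simp add: Bad_def f_def)
  qed (use assms(3) in \<open>simp add: Bad_def\<close>)
  moreover have "- (\<Union>p\<in>UNIV. Bad p) \<subseteq> ?Good"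
  proof safe
    fix D s a assume "D \<notin> (\<Union>p\<in>UNIV. Bad p)" and "d s a > 0"
    then have "D \<notin> Bad (s, a)" by blast
    moreover have "0 \<le> f s a" and "8 * u * sqrt (L / (real l * d s a)) = 2 * f s a"
      using assms(2,5) \<open>0 \<le> L\<close> \<open>d s a > 0\<close> by (simp_all add: f_def)
    ultimately show "0 \<le> Pexp P t s a ?W - g D s a"
      and "Pexp P t s a ?W - g D s a \<le> 8 * u * sqrt (L / (real l * d s a))"
      using \<open>d s a > 0\<close> by (auto simp: g_def Bad_def visit_mean_def abs_less_iff not_le)
  qed
  ultimately have
    "1 - real CARD('s \<times> 'a) * (\<delta> / (real H * CARD('s \<times> 'a))) \<le> measure_pmf.prob ?M ?Good"
    by (intro measure_pmf_prob_ge_union_bound) auto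
  then show ?thesis using assms(1) by simp
qed

end
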